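(* Consider the Distributed Guided Local Search (DGLS) algorithm described in the context, with evaporation rate $0<\gamma<1$ and any update scope. Then at every round, for every agent $i$, neighbor $j$ and values $d_i\in D_i,d_j\in D_j$, the effective cost satisfies $\mathrm{EffCost}_A(d_i,j,d_j)\le \hat f_{ij}+1/(1-\gamma)$ in the additive manner, and $\mathrm{EffCost}_M(d_i,j,d_j)\le \hat f_{ij}\cdot[1+1/(1-\gamma)]$ in the multiplicative manner.
   Context: A (binary) Distributed Constraint Optimization Problem (DCOP) consists of agents $1,\dots,n$, each controlling one variable $x_i$ with finite domain $D_i$, and binary constraint functions $f_{ij}:D_i\times D_j\to\mathbb{R}_{\ge0}$ with $f_{ji}=f_{ij}^T$; $\mathcal{N}_i$ is the set of neighbors of $i$. Write $\check f_{ij}=\min_{d_i,d_j} f_{ij}(d_i,d_j)$, $\hat f_{ij}=\max_{d_i,d_j} f_{ij}(d_i,d_j)$. DGLS is parameterized by a manner (additive $A$ or multiplicative $M$), an evaporation rate $\gamma$, and a scope ($cel$, $tab$, $row$, $col$). Each agent $i$ keeps, for each $j\in\mathcal{N}_i$, a cost modifier $M_{ij}$ (a $|D_i|\times|D_j|$ real matrix), initialized to $0$. The effective cost is $\mathrm{EffCost}_A(d_i,j,d_j)=f_{ij}(d_i,d_j)+M_{ij}(d_i,d_j)$ (additive) or $\mathrm{EffCost}_M(d_i,j,d_j)=f_{ij}(d_i,d_j)\cdot[1+M_{ij}(d_i,d_j)]$ (multiplicative). Initially each agent picks a random value $d_i\in D_i$ and sends it to its neighbors. Rounds are synchronous; in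 each round agent $i$: (1) sets $\bar P_i=\emptyset$ and receives the neighbors' current values $d_j$; (2) computes $d_i^*\in\arg\min_{d\in D_i}\sum_{j\in\mathcal{N}_i}\mathrm{EffCost}(d,j,d_j)$ and gain $\Delta_i=\sum_{j}[\mathrm{EffCost}(d_i,j,d_j)-\mathrm{EffCost}(d_i^*,j,d_j)]$, and exchanges gains with neighbors; (3) if $\Delta_i>0$ and $\Delta_i$ is the best improvement among itself and its neighbors, it sets $d_i\gets d_i^*$; otherwise, if no neighbor can improve (all neighbors' gains are $\le 0$), then for each $j\in\mathcal{N}_i$ it declares $f_{ij}$ violated with probability $\eta=\frac{f_{ij}(d_i,d_j)-\check f_{ij}}{\hat f_{ij}-\check f_{ij}}$, and for each violated one adds $j$ to $\bar P_i$ and sends a SYNC message to $j$; (4) lets $\tilde P_i$ be the set of neighbors from which it received SYNC this round; (5) for each $j\in\mathcal{N}_i$: first evaporates, $M_{ij}\gets\gamma M_{ij}$ entrywise, then updates with current values $d_i,d_j$: scope $cel$: if $j\in\bar P_i\cup\tilde P_i$, $M_{ij}(d_i,d_j)\mathrel{+}=1$; scope $tab$: if $j\in\bar P_i\cup\tilde P_i$, all entries of $M_{ij}$ are increased by 1; scope $row$: if $j\in\bar P_i$, $M_{ij}(d_i,d_j')\mathrel{+}=1$ for all $d_j'$; if $j\in\tilde P_i$, $M_{ij}(d_i',d_j)\mathrel{+}=1$ for all $d_i'$; if $j\in\bar P_i\cap\tilde P_i$, $M_{ij}(d_i,d_j)\mathrel{-}=1$; scope $col$: same as $row$ with the roles exchanged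 (if $j\in\bar P_i$ increment column $d_j$, if $j\in\tilde P_i$ increment row $d_i$, and subtract 1 at $(d_i,d_j)$ if both); (6) sends its value $d_i$ to its neighbors. *)

theory Defs
  imports Complex_Main
begin

text \<open>Binary DCOP: agents are the elements of a finite type 'a; agent i controls a
variable with finite nonempty domain D i; N i is the neighbour set; f i j is the
constraint function between i and j (f j i = transpose of f i j).\<close>

datatype manner = Additive | Multiplicative
datatype scope = Cel | Tab | Row | Col

definition fmin :: "('a \<Rightarrow> 'v set) \<Rightarrow> ('a \<Rightarrow> 'a \<Rightarrow> 'v \<Rightarrow> 'v \<Rightarrow> real) \<Rightarrow> 'a \<Rightarrow> 'a \<Rightarrow> real" where
  "fmin D f i j = Min ((\<lambda>(a, b). f i j a b) ` (D i \<times> D j))"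

definition fmax :: "('a \<Rightarrow> 'v set) \<Rightarrow> ('a \<Rightarrow> 'a \<Rightarrow> 'v \<Rightarrow> 'v \<Rightarrow> real) \<Rightarrow> 'a \<Rightarrow> 'a \<Rightarrow> real" where
  "fmax D f i j = Max ((\<lambda>(a, b). f i j a b) ` (D i \<times> D j))"

fun effc :: "manner \<Rightarrow> real \<Rightarrow> real \<Rightarrow> real" where
  "effc Additive c m = c + m"
| "effc Multiplicative c m = c * (1 + m)"

text \<open>EffCost(d_i, j, d_j) for agent i with cost-modifier family M (M i j is agent i's
matrix for neighbour j).\<close>
definition EffCost :: "manner \<Rightarrow> ('a \<Rightarrow> 'a \<Rightarrow> 'v \<Rightarrow> 'v \<Rightarrow> real) \<Rightarrow> ('a \<Rightarrow> 'a \<Rightarrow> 'v \<Rightarrow> 'v \<Rightarrow> real)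
    \<Rightarrow> 'a \<Rightarrow> 'v \<Rightarrow> 'a \<Rightarrow> 'v \<Rightarrow> real" where
  "EffCost mn f M i di j dj = effc mn (f i j di dj) (M i j di dj)"

definition local_cost :: "manner \<Rightarrow> ('a \<Rightarrow> 'a set) \<Rightarrow> ('a \<Rightarrow> 'a \<Rightarrow> 'v \<Rightarrow> 'v \<Rightarrow> real)
    \<Rightarrow> ('a \<Rightarrow> 'a \<Rightarrow> 'v \<Rightarrow> 'v \<Rightarrow> real) \<Rightarrow> ('a \<Rightarrow> 'v) \<Rightarrow> 'a \<Rightarrow> 'v \<Rightarrow> real" where
  "local_cost mn N f M x i d = (\<Sum>j\<in>N i. EffCost mn f M i d j (x j))"

definition gain :: "manner \<Rightarrow> ('a \<Rightarrow> 'v set) \<Rightarrow> ('a \<Rightarrow> 'a set) \<Rightarrow> ('a \<Rightarrow> 'a \<Rightarrow> 'v \<Rightarrow> 'v \<Rightarrow> real)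
    \<Rightarrow> ('a \<Rightarrow> 'a \<Rightarrow> 'v \<Rightarrow> 'v \<Rightarrow> real) \<Rightarrow> ('a \<Rightarrow> 'v) \<Rightarrow> 'a \<Rightarrow> real" where
  "gain mn D N f M x i =
     local_cost mn N f M x i (x i) - Min (local_cost mn N f M x i ` D i)"

definition eta :: "('a \<Rightarrow> 'v set) \<Rightarrow> ('a \<Rightarrow> 'a \<Rightarrow> 'v \<Rightarrow> 'v \<Rightarrow> real) \<Rightarrow> 'a \<Rightarrow> 'a \<Rightarrow> 'v \<Rightarrow> 'v \<Rightarrow> real" where
  "eta D f i j di dj = (f i j di dj - fmin D f i j) / (fmax D f i j - fmin D f i j)"

text \<open>Update of a (already evaporated) modifier matrix m at current values (di, dj);
p: j is in Pbar_i (i declared the constraint violated), q: j is in Ptilde_i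
(i received SYNC from j). Entries are indexed (row = value of i, column = value of j).\<close>
fun upd :: "scope \<Rightarrow> 'v \<Rightarrow> 'v \<Rightarrow> bool \<Rightarrow> bool \<Rightarrow> ('v \<Rightarrow> 'v \<Rightarrow> real) \<Rightarrow> ('v \<Rightarrow> 'v \<Rightarrow> real)" where
  "upd Cel di dj p q m = (\<lambda>a b. m a b + (if (p \<or> q) \<and> a = di \<and> b = dj then 1 else 0))"
| "upd Tab di dj p q m = (\<lambda>a b. m a b + (if p \<or> q then 1 else 0))"
| "upd Row di dj p q m = (\<lambda>a b. m a b
      + (if p \<and> a = di then 1 else 0)
      + (if q \<and> b = dj then 1 else 0)
      - (if p \<and> q \<and> a = di \<and> b = dj then 1 else 0))"
| "upd Col di dj p q m = (\<lambda>a b. m a b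
      + (if p \<and> b = dj then 1 else 0)
      + (if q \<and> a = di then 1 else 0)
      - (if p \<and> q \<and> a = di \<and> b = dj then 1 else 0))"

text \<open>The random / tie-breaking choices are existentially quantified:
moved i says whether agent i changes its value in step (3); Pbar i is the set of
neighbours whose constraint i declares violated (only possible when i did not move,
no neighbour can improve, and the violation probability is positive).\<close>
definition dgls_step :: "manner \<Rightarrow> real \<Rightarrow> scope \<Rightarrow> ('a \<Rightarrow> 'v set) \<Rightarrow> ('a \<Rightarrow> 'a set)
    \<Rightarrow> ('a \<Rightarrow> 'a \<Rightarrow> 'v \<Rightarrow> 'v \<Rightarrow> real)
    \<Rightarrow> ('a \<Rightarrow> 'v) \<Rightarrow> ('a \<Rightarrow> 'a \<Rightarrow> 'v \<Rightarrow> 'v \<Rightarrow> real)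
    \<Rightarrow> ('a \<Rightarrow> 'v) \<Rightarrow> ('a \<Rightarrow> 'a \<Rightarrow> 'v \<Rightarrow> 'v \<Rightarrow> real) \<Rightarrow> bool" where
  "dgls_step mn \<gamma> sc D N f x M x' M' \<longleftrightarrow>
     (\<exists>moved :: 'a \<Rightarrow> bool. \<exists>Pbar :: 'a \<Rightarrow> 'a set.
       (\<forall>i. let \<Delta> = gain mn D N f M x in
          (\<Delta> i > 0 \<and> (\<forall>j\<in>N i. \<Delta> j < \<Delta> i) \<longrightarrow> moved i)
        \<and> (moved i \<longrightarrow> \<Delta> i > 0 \<and> (\<forall>j\<in>N i. \<Delta> j \<le> \<Delta> i)
              \<and> x' i \<in> D i
              \<and> local_cost mn N f M x i (x' i) = Min (local_cost mn N f M x i ` D i))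
        \<and> (\<not> moved i \<longrightarrow> x' i = x i)
        \<and> Pbar i \<subseteq> N i
        \<and> (Pbar i \<noteq> {} \<longrightarrow> \<not> moved i \<and> (\<forall>j\<in>N i. \<Delta> j \<le> 0))
        \<and> (\<forall>j\<in>Pbar i. eta D f i j (x i) (x j) > 0))
     \<and> (\<forall>i j. M' i j =
          (if j \<in> N i
           then upd sc (x' i) (x j) (j \<in> Pbar i) (i \<in> Pbar j) (\<lambda>a b. \<gamma> * M i j a b)
           else M i j)))"

definition dcop :: "('a \<Rightarrow> 'v set) \<Rightarrow> ('a \<Rightarrow> 'a set) \<Rightarrow> ('a \<Rightarrow> 'a \<Rightarrow> 'v \<Rightarrow> 'v \<Rightarrow> real) \<Rightarrow> bool" where
  "dcop D N f \<longleftrightarrow>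
     (\<forall>i. finite (D i) \<and> D i \<noteq> {} \<and> i \<notin> N i)
   \<and> (\<forall>i j. j \<in> N i \<longleftrightarrow> i \<in> N j)
   \<and> (\<forall>i. \<forall>j\<in>N i. \<forall>a\<in>D i. \<forall>b\<in>D j. f i j a b \<ge> 0 \<and> f j i b a = f i j a b)"

text \<open>An execution of DGLS: xs t, Ms t are the values and modifiers at the start of round t.\<close>
definition dgls_run :: "manner \<Rightarrow> real \<Rightarrow> scope \<Rightarrow> ('a \<Rightarrow> 'v set) \<Rightarrow> ('a \<Rightarrow> 'a set)
    \<Rightarrow> ('a \<Rightarrow> 'a \<Rightarrow> 'v \<Rightarrow> 'v \<Rightarrow> real)
    \<Rightarrow> (nat \<Rightarrow> 'a \<Rightarrow> 'v) \<Rightarrow> (nat \<Rightarrow> 'a \<Rightarrow> 'a \<Rightarrow> 'v \<Rightarrow> 'v \<Rightarrow> real) \<Rightarrow> bool" where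
  "dgls_run mn \<gamma> sc D N f xs Ms \<longleftrightarrow>
     (\<forall>i. xs 0 i \<in> D i) \<and> Ms 0 = (\<lambda>i j a b. 0)
   \<and> (\<forall>t. dgls_step mn \<gamma> sc D N f (xs t) (Ms t) (xs (Suc t)) (Ms (Suc t)))"

end

theory Submission
  imports Defs
begin

text \<open>Every cost-modifier entry is multiplied by \<open>\<gamma>\<close> and then increased by 0 or 1 in each
round, so starting from 0 it stays in \<open>[0, 1/(1 - \<gamma>)]\<close>, the fixed point of \<open>x \<mapsto> \<gamma> x + 1\<close>.
Since the effective cost is monotone in both the constraint value and the modifier entry,
bounding the former by \<open>fmax\<close> and the latter by \<open>1/(1 - \<gamma>)\<close> gives the claim in either manner.\<close>

lemma upd_increment_bounds:
  fixes m :: "'v \<Rightarrow> 'v \<Rightarrow> real"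
  shows "m a b \<le> upd sc di dj p q m a b" and "upd sc di dj p q m a b \<le> m a b + 1"
  by (cases sc; auto)+

lemma evaporate_increment_bounded:
  fixes \<gamma> x y :: real
  assumes "0 \<le> \<gamma>" "\<gamma> < 1" "0 \<le> x" "x \<le> 1 / (1 - \<gamma>)" "\<gamma> * x \<le> y" "y \<le> \<gamma> * x + 1"
  shows "0 \<le> y \<and> y \<le> 1 / (1 - \<gamma>)"
proof
  show "0 \<le> y" using assms(1,3,5) by (meson order_trans zero_le_mult_iff)
  have "\<gamma> * x \<le> \<gamma> * (1 / (1 - \<gamma>))" using assms(4) by (rule mult_left_mono) (use assms(1) in simp)
  moreover have "\<gamma> * (1 / (1 - \<gamma>)) + 1 = 1 / (1 - \<gamma>)" using assms(2) by (simp add: field_simps)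
  ultimately show "y \<le> 1 / (1 - \<gamma>)" using assms(6) by linarith
qed

definition modifiers_bounded :: "real \<Rightarrow> ('a \<Rightarrow> 'a \<Rightarrow> 'v \<Rightarrow> 'v \<Rightarrow> real) \<Rightarrow> bool" where
  "modifiers_bounded \<gamma> M \<longleftrightarrow> (\<forall>i j a b. 0 \<le> M i j a b \<and> M i j a b \<le> 1 / (1 - \<gamma>))"

lemma dgls_step_modifiers_bounded:
  assumes "0 \<le> \<gamma>" "\<gamma> < 1"
    and step: "dgls_step mn \<gamma> sc D N f x M x' M'"
    and bounded: "modifiers_bounded \<gamma> M"
  shows "modifiers_bounded \<gamma> M'"
  unfolding modifiers_bounded_def
proof (intro allI)
  fix i j a b
  from step obtain Pbar where M':
    "M' i j = (if j \<in> N i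
               then upd sc (x' i) (x j) (j \<in> Pbar i) (i \<in> Pbar j) (\<lambda>a b. \<gamma> * M i j a b)
               else M i j)"
    unfolding dgls_step_def by blast
  have old: "0 \<le> M i j a b" "M i j a b \<le> 1 / (1 - \<gamma>)"
    using bounded unfolding modifiers_bounded_def by auto
  show "0 \<le> M' i j a b \<and> M' i j a b \<le> 1 / (1 - \<gamma>)"
  proof (cases "j \<in> N i")
    case True
    let ?m = "\<lambda>a b. \<gamma> * M i j a b"
    have "M' i j a b = upd sc (x' i) (x j) (j \<in> Pbar i) (i \<in> Pbar j) ?m a b"
      using M' True by simp
    then show ?thesis
      using evaporate_increment_bounded[OF assms(1,2) old] upd_increment_bounds[where m = ?m]
      by simp
  next
    case False
    then show ?thesis using M' old by simp
  qed
qed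

lemma dgls_run_modifiers_bounded:
  assumes "0 \<le> \<gamma>" "\<gamma> < 1" and run: "dgls_run mn \<gamma> sc D N f xs Ms"
  shows "modifiers_bounded \<gamma> (Ms t)"
proof (induction t)
  case 0
  then show ?case
    using run \<open>\<gamma> < 1\<close> unfolding dgls_run_def modifiers_bounded_def by simp
next
  case (Suc t)
  with run show ?case
    unfolding dgls_run_def by (blast intro: dgls_step_modifiers_bounded[OF assms(1,2)])
qed

lemma fmax_ge:
  assumes "finite (D i)" "finite (D j)" "di \<in> D i" "dj \<in> D j"
  shows "f i j di dj \<le> fmax D f i j"
  unfolding fmax_def using assms by (intro Max_ge) force+

lemma effc_mono:
  assumes "c \<le> c'" "m \<le> m'" "0 \<le> c" "0 \<le> m"
  shows "effc mn c m \<le> effc mn c' m'"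
  using assms by (cases mn) (auto intro: mult_mono)

theorem corollary1:
  fixes D :: "'a::finite \<Rightarrow> 'v set" and N :: "'a \<Rightarrow> 'a set"
    and f :: "'a \<Rightarrow> 'a \<Rightarrow> 'v \<Rightarrow> 'v \<Rightarrow> real"
    and \<gamma> :: real and sc :: scope and mn :: manner
    and xs :: "nat \<Rightarrow> 'a \<Rightarrow> 'v" and Ms :: "nat \<Rightarrow> 'a \<Rightarrow> 'a \<Rightarrow> 'v \<Rightarrow> 'v \<Rightarrow> real"
  assumes "dcop D N f"
    and "0 < \<gamma>" and "\<gamma> < 1"
    and "dgls_run mn \<gamma> sc D N f xs Ms"
    and "j \<in> N i" and "di \<in> D i" and "dj \<in> D j"
  shows "(mn = Additive \<longrightarrow>
            EffCost Additive f (Ms t) i di j dj \<le> fmax D f i j + 1 / (1 - \<gamma>))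
       \<and> (mn = Multiplicative \<longrightarrow>
            EffCost Multiplicative f (Ms t) i di j dj \<le> fmax D f i j * (1 + 1 / (1 - \<gamma>)))"
proof -
  have modifier: "0 \<le> Ms t i j di dj" "Ms t i j di dj \<le> 1 / (1 - \<gamma>)"
    using dgls_run_modifiers_bounded[OF _ assms(3,4)] assms(2)
    unfolding modifiers_bounded_def by auto
  have constraint: "0 \<le> f i j di dj" "f i j di dj \<le> fmax D f i j"
    using assms(1,5-7) by (auto simp: dcop_def intro: fmax_ge)
  have bound: "EffCost mn' f (Ms t) i di j dj \<le> effc mn' (fmax D f i j) (1 / (1 - \<gamma>))" for mn'
    unfolding EffCost_def using modifier constraint by (intro effc_mono)
  show ?thesis using bound[of Additive] bound[of Multiplicative] by simp
qed

end
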